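(* Let $G=(V,E)$ be an event graph and let $\mathcal C$ be the unique sink component of $\mathrm{dec}(G)$. For every $v\in V$ and every $X\subseteq\mathcal U_{|V}$, the node $(v,X)$ belongs to $\mathcal C$ if and only if there exists a closed walk $W$ in $G$ such that (1) $W$ starts and ends at $v$; (2) for each $x\in\mathcal U_{|V}$, $W$ contains at least one node labeled $\mathtt{i}x$ or $\mathtt{d}x$; (3) for each $x\in\mathcal U_{|V}$, $x\in X$ if and only if the last node of $W$ whose label refers to $x$ is labeled $\mathtt{i}x$ (equivalently, $x\notin X$ iff that last node is labeled $\mathtt{d}x$).
   Context: An event graph is a finite, connected, undirected graph $G=(V,E)$, with $n=|V|$, in which every node $v$ carries a label that is either $\mathtt{i}x_v$ (insertion of $x_v$) or $\mathtt{d}x_v$ (deletion of $x_v$), where $x_v$ is an element of a finite universe $\mathcal U$. Write $\mathcal U_{|V}=\{x_v : v\in V\}$. It is assumed that for each $x\in\mathcal U_{|V}$ at least one node is labeled $\mathtt{i}x$ and at least one node is labeled $\mathtt{d}x$. The decorated graph $\mathrm{dec}(G)$ is the directed graph with vertex set $V\times 2^{\mathcal U_{|V}}$ in which $((u,X),(v,Y))$ is an edge if and only if $\{u,v\}\in E$ and $Y=X\cup\{x_v\}$ when $v$ is labeled $\mathtt{i}x_v$, respectively $Y=X\setminus\{x_v\}$ when $v$ is labeled $\mathtt{d}x_v$. A sink component of $\mathrm{dec}(G)$ is a strongly connected component of $\mathrm{dec}(G)$ from which no edge leads to a different strongly connected component; $\mathrm{dec}(G)$ has exactly one sink component, denoted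 $\mathcal C$. A walk in a graph is a finite sequence of nodes in which each node is joined by an edge to its successor (nodes may repeat); it is closed if its first and last nodes coincide. *)

theory Defs
  imports Main
begin

text \<open>An event graph: vertex set V, undirected edges E given as 2-element sets of
vertices, and a labeling: ins v is True iff v is labeled i x_v (insertion), False iff
labeled d x_v (deletion); elem v = x_v.\<close>

definition is_walk :: "'v set set \<Rightarrow> 'v list \<Rightarrow> bool" where
  "is_walk E W \<longleftrightarrow> W \<noteq> [] \<and>
     (\<forall>i. Suc i < length W \<longrightarrow> {W ! i, W ! Suc i} \<in> E)"

definition event_graph :: "'v set \<Rightarrow> 'v set set \<Rightarrow> ('v \<Rightarrow> bool) \<Rightarrow> ('v \<Rightarrow> 'u) \<Rightarrow> bool" where
  "event_graph V E ins elem \<longleftrightarrow>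
     finite V \<and> V \<noteq> {} \<and>
     (\<forall>e\<in>E. e \<subseteq> V \<and> card e = 2) \<and>
     (\<forall>u\<in>V. \<forall>v\<in>V. \<exists>W. is_walk E W \<and> hd W = u \<and> last W = v) \<and>
     (\<forall>x\<in>elem ` V. (\<exists>v\<in>V. elem v = x \<and> ins v) \<and> (\<exists>v\<in>V. elem v = x \<and> \<not> ins v))"

definition dec_vertices :: "'v set \<Rightarrow> ('v \<Rightarrow> 'u) \<Rightarrow> ('v \<times> 'u set) set" where
  "dec_vertices V elem = V \<times> Pow (elem ` V)"

definition dec_edges :: "'v set \<Rightarrow> 'v set set \<Rightarrow> ('v \<Rightarrow> bool) \<Rightarrow> ('v \<Rightarrow> 'u)
    \<Rightarrow> (('v \<times> 'u set) \<times> ('v \<times> 'u set)) set" where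
  "dec_edges V E ins elem =
     {((u, X), (v, Y)). (u, X) \<in> dec_vertices V elem \<and> (v, Y) \<in> dec_vertices V elem \<and>
        {u, v} \<in> E \<and> Y = (if ins v then X \<union> {elem v} else X - {elem v})}"

definition is_scc :: "'a set \<Rightarrow> ('a \<times> 'a) set \<Rightarrow> 'a set \<Rightarrow> bool" where
  "is_scc N D C \<longleftrightarrow> C \<subseteq> N \<and> C \<noteq> {} \<and>
     (\<forall>a\<in>C. \<forall>b\<in>C. (a, b) \<in> D\<^sup>*) \<and>
     (\<forall>a\<in>C. \<forall>b\<in>N. (a, b) \<in> D\<^sup>* \<and> (b, a) \<in> D\<^sup>* \<longrightarrow> b \<in> C)"

definition is_sink_component :: "'a set \<Rightarrow> ('a \<times> 'a) set \<Rightarrow> 'a set \<Rightarrow> bool" where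
  "is_sink_component N D C \<longleftrightarrow> is_scc N D C \<and> (\<forall>a\<in>C. \<forall>b. (a, b) \<in> D \<longrightarrow> b \<in> C)"

end

theory Submission imports Defs begin

text \<open>
  Walking along a walk W of G from a state (hd W, Y) of dec(G)
  traces a path of dec(G) ending in (last W, Y'), where Y' arises from Y by applying
  the labels of tl W one after the other; conversely every path of dec(G) is such a
  lifted walk.  If every element of the universe is mentioned on W, then Y' only depends
  on W: x \<in> Y' iff the last node of W mentioning x is an insertion -- provided the start
  state is consistent, i.e. elem (hd W) \<in> Y iff hd W is an insertion.  Every state in
  the sink component is consistent, since it has a predecessor in dec(G).
\<close>

section \<open>Walks\<close>

lemma is_walk_nonempty: "is_walk E W \<Longrightarrow> W \<noteq> []"
  by (simp add: is_walk_def)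

lemma is_walk_single [simp]: "is_walk E [a]"
  by (simp add: is_walk_def)

lemma is_walk_snoc:
  assumes "W \<noteq> []"
  shows "is_walk E (W @ [a]) \<longleftrightarrow> is_walk E W \<and> {last W, a} \<in> E"
proof -
  obtain n where n: "length W = Suc n"
    using assms by (cases W) auto
  have last_W: "last W = W ! n"
    using assms n by (simp add: last_conv_nth)
  have "(\<forall>i. Suc i < Suc (length W) \<longrightarrow> {(W @ [a]) ! i, (W @ [a]) ! Suc i} \<in> E) \<longleftrightarrow>
        (\<forall>i. Suc i < length W \<longrightarrow> {W ! i, W ! Suc i} \<in> E) \<and> {W ! n, a} \<in> E"
    using n by (auto simp: nth_append less_Suc_eq)
  then show ?thesis
    using assms by (simp add: is_walk_def last_W)
qed

lemma walk_join_last: "B \<noteq> [] \<Longrightarrow> last A = hd B \<Longrightarrow> last (A @ tl B) = last B"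
  by (cases B) auto

lemma walk_join_set: "B \<noteq> [] \<Longrightarrow> A \<noteq> [] \<Longrightarrow> last A = hd B \<Longrightarrow> set (A @ tl B) = set A \<union> set B"
  by (cases B) auto

lemma is_walk_join:
  assumes "is_walk E A" "is_walk E B" "last A = hd B"
  shows "is_walk E (A @ tl B)"
  using assms(2,3)
proof (induction B rule: rev_induct)
  case Nil
  then show ?case by (simp add: is_walk_def)
next
  case (snoc b B)
  show ?case
  proof (cases "B = []")
    case True
    then show ?thesis using snoc assms(1) by simp
  next
    case False
    have walk_B: "is_walk E B" and edge: "{last B, b} \<in> E"
      using snoc.prems(1) is_walk_snoc[OF False] by simp_all
    have "is_walk E (A @ tl B)"
      using snoc False walk_B by simp
    moreover have "last (A @ tl B) = last B"
      using walk_join_last[OF False] snoc.prems(2) False by simp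
    ultimately have "is_walk E ((A @ tl B) @ [b])"
      using is_walk_snoc[of "A @ tl B"] edge is_walk_nonempty[OF assms(1)] by simp
    then show ?thesis
      using False by simp
  qed
qed

lemma is_walk_set:
  assumes "is_walk E W" "hd W \<in> V" "\<forall>e\<in>E. e \<subseteq> V"
  shows "set W \<subseteq> V"
  using assms
proof (induction W rule: rev_induct)
  case (snoc a W)
  show ?case
  proof (cases "W = []")
    case False
    then have "is_walk E W" "{last W, a} \<in> E"
      using snoc.prems(1) is_walk_snoc[OF False] by simp_all
    then show ?thesis
      using snoc False by auto
  qed (use snoc in simp)
qed simp

text \<open>In a connected graph, for every finite S \<subseteq> V there is a closed walk at v visiting
  all of S: glue closed walks through the single nodes of S.\<close>
lemma closed_walk_covering:
  assumes conn: "\<forall>u\<in>V. \<forall>w\<in>V. \<exists>W. is_walk E W \<and> hd W = u \<and> last W = w"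
    and "v \<in> V" and "finite S" and "S \<subseteq> V"
  shows "\<exists>W. is_walk E W \<and> hd W = v \<and> last W = v \<and> S \<subseteq> set W"
  using assms(3,4)
proof (induction S rule: finite_induct)
  case empty
  show ?case by (intro exI[of _ "[v]"]) simp
next
  case (insert s S)
  then obtain W where W: "is_walk E W" "hd W = v" "last W = v" "S \<subseteq> set W"
    by blast
  obtain P where P: "is_walk E P" "hd P = v" "last P = s"
    using conn \<open>v \<in> V\<close> insert.prems by blast
  obtain Q where Q: "is_walk E Q" "hd Q = s" "last Q = v"
    using conn \<open>v \<in> V\<close> insert.prems by blast
  have ne: "W \<noteq> []" "P \<noteq> []" "Q \<noteq> []"
    using W P Q is_walk_nonempty by blast+
  define R where "R = P @ tl Q"
  have R: "is_walk E R" "hd R = v" "last R = v" "set R = set P \<union> set Q"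
    unfolding R_def using is_walk_join[OF P(1) Q(1)] walk_join_last[of Q P] walk_join_set[of Q P] ne P Q
    by simp_all
  have "s \<in> set R"
    using R(4) P(3) ne(2) last_in_set by fastforce
  moreover have "R \<noteq> []"
    using is_walk_nonempty[OF R(1)] .
  ultimately show ?case
    using is_walk_join[OF W(1) R(1)] walk_join_last[of R W] walk_join_set[of R W] W R ne
    by (intro exI[of _ "W @ tl R"]) auto
qed

section \<open>Running a walk on a state\<close>

definition apply_event :: "('v \<Rightarrow> bool) \<Rightarrow> ('v \<Rightarrow> 'u) \<Rightarrow> 'u set \<Rightarrow> 'v \<Rightarrow> 'u set" where
  "apply_event ins elem Y w = (if ins w then Y \<union> {elem w} else Y - {elem w})"

definition mentions :: "('v \<Rightarrow> 'u) \<Rightarrow> 'v list \<Rightarrow> 'u \<Rightarrow> bool" where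
  "mentions elem W x \<longleftrightarrow> (\<exists>i<length W. elem (W ! i) = x)"

definition last_is_insertion :: "('v \<Rightarrow> bool) \<Rightarrow> ('v \<Rightarrow> 'u) \<Rightarrow> 'v list \<Rightarrow> 'u \<Rightarrow> bool" where
  "last_is_insertion ins elem W x \<longleftrightarrow>
     (\<exists>i<length W. elem (W ! i) = x \<and> ins (W ! i) \<and>
        (\<forall>j. i < j \<and> j < length W \<longrightarrow> elem (W ! j) \<noteq> x))"

lemma mentions_snoc: "mentions elem (W @ [a]) x \<longleftrightarrow> mentions elem W x \<or> elem a = x"
proof -
  have "(\<exists>i<Suc (length W). elem ((W @ [a]) ! i) = x) \<longleftrightarrow>
        (\<exists>i<length W. elem ((W @ [a]) ! i) = x) \<or> elem ((W @ [a]) ! length W) = x"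
    by (auto simp: less_Suc_eq)
  then show ?thesis
    unfolding mentions_def by (simp add: nth_append cong: conj_cong)
qed

lemma last_is_insertion_snoc:
  "last_is_insertion ins elem (W @ [a]) x \<longleftrightarrow>
     (if elem a = x then ins a else last_is_insertion ins elem W x)"
proof (cases "elem a = x")
  case True
  have "i = length W"
    if "i < Suc (length W)" "\<forall>j. i < j \<and> j < Suc (length W) \<longrightarrow> elem ((W @ [a]) ! j) \<noteq> x" for i
    using that True by (metis less_SucE lessI nth_append_length)
  then show ?thesis
    using True unfolding last_is_insertion_def
    by (auto intro!: exI[of _ "length W"]) (metis nth_append_length)
next
  case False
  show ?thesis
    unfolding last_is_insertion_def
  proof
    assume "\<exists>i<length (W @ [a]). elem ((W @ [a]) ! i) = x \<and> ins ((W @ [a]) ! i) \<and>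
        (\<forall>j. i < j \<and> j < length (W @ [a]) \<longrightarrow> elem ((W @ [a]) ! j) \<noteq> x)"
    then obtain i where i: "i < Suc (length W)" "elem ((W @ [a]) ! i) = x" "ins ((W @ [a]) ! i)"
        "\<forall>j. i < j \<and> j < Suc (length W) \<longrightarrow> elem ((W @ [a]) ! j) \<noteq> x"
      by auto
    then have "i < length W"
      using False by (metis less_SucE nth_append_length)
    then show "if elem a = x then ins a else \<exists>i<length W. elem (W ! i) = x \<and> ins (W ! i) \<and>
        (\<forall>j. i < j \<and> j < length W \<longrightarrow> elem (W ! j) \<noteq> x)"
      using i False by (auto simp: nth_append intro!: exI[of _ i])
  next
    assume "if elem a = x then ins a else \<exists>i<length W. elem (W ! i) = x \<and> ins (W ! i) \<and>
        (\<forall>j. i < j \<and> j < length W \<longrightarrow> elem (W ! j) \<noteq> x)"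
    then obtain i where "i < length W" "elem (W ! i) = x" "ins (W ! i)"
        "\<forall>j. i < j \<and> j < length W \<longrightarrow> elem (W ! j) \<noteq> x"
      using False by auto
    then show "\<exists>i<length (W @ [a]). elem ((W @ [a]) ! i) = x \<and> ins ((W @ [a]) ! i) \<and>
        (\<forall>j. i < j \<and> j < length (W @ [a]) \<longrightarrow> elem ((W @ [a]) ! j) \<noteq> x)"
      using False by (auto simp: nth_append less_Suc_eq intro!: exI[of _ i])
  qed
qed

lemma run_membership:
  assumes consistent: "elem w \<in> Y \<longleftrightarrow> ins w"
  shows "x \<in> foldl (apply_event ins elem) Y ws \<longleftrightarrow>
     (if mentions elem (w # ws) x then last_is_insertion ins elem (w # ws) x else x \<in> Y)"
proof (induction ws rule: rev_induct)
  case Nil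
  then show ?case
    using consistent by (auto simp: mentions_def last_is_insertion_def)
next
  case (snoc a ws)
  then show ?case
    using mentions_snoc[of elem "w # ws" a x] last_is_insertion_snoc[of ins elem "w # ws" a x]
    by (auto simp: apply_event_def)
qed

lemma run_subset:
  "set ws \<subseteq> V \<Longrightarrow> Y \<subseteq> elem ` V \<Longrightarrow> foldl (apply_event ins elem) Y ws \<subseteq> elem ` V"
proof (induction ws arbitrary: Y)
  case (Cons a ws)
  then have "apply_event ins elem Y a \<subseteq> elem ` V"
    by (auto simp: apply_event_def)
  then show ?case
    using Cons by simp
qed simp

lemma run_covering_walk:
  assumes "W \<noteq> []" "set W \<subseteq> V" "Y \<subseteq> elem ` V"
    and consistent: "elem (hd W) \<in> Y \<longleftrightarrow> ins (hd W)"
    and covers: "\<forall>x\<in>elem ` V. mentions elem W x"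
  shows "foldl (apply_event ins elem) Y (tl W) = {x \<in> elem ` V. last_is_insertion ins elem W x}"
proof -
  have W: "W = hd W # tl W"
    using assms(1) by simp
  have "foldl (apply_event ins elem) Y (tl W) \<subseteq> elem ` V"
    using run_subset[OF _ assms(3)] assms(1,2) by (meson list.set_sel(2) subset_code(1))
  moreover have "x \<in> foldl (apply_event ins elem) Y (tl W) \<longleftrightarrow> last_is_insertion ins elem W x"
    if "x \<in> elem ` V" for x
    using run_membership[of elem "hd W" Y ins x "tl W"] consistent covers that W by simp
  ultimately show ?thesis
    by blast
qed

section \<open>Walks of G and paths of dec(G)\<close>

lemma dec_edgeI:
  assumes "{u, w} \<in> E" "u \<in> V" "w \<in> V" "Y \<subseteq> elem ` V"
  shows "((u, Y), (w, apply_event ins elem Y w)) \<in> dec_edges V E ins elem"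
  using assms by (auto simp: dec_edges_def dec_vertices_def apply_event_def)

lemma dec_edgeD:
  assumes "((u, Y), (w, Z)) \<in> dec_edges V E ins elem"
  shows "{u, w} \<in> E" "Z = apply_event ins elem Y w"
  using assms by (auto simp: dec_edges_def apply_event_def)

lemma walk_lifts:
  assumes "is_walk E W" "hd W \<in> V" "Y \<subseteq> elem ` V" "\<forall>e\<in>E. e \<subseteq> V"
  shows "((hd W, Y), (last W, foldl (apply_event ins elem) Y (tl W))) \<in> (dec_edges V E ins elem)\<^sup>*"
  using assms(1,2)
proof (induction W rule: rev_induct)
  case (snoc a W)
  show ?case
  proof (cases "W = []")
    case False
    let ?Z = "foldl (apply_event ins elem) Y (tl W)"
    have walk: "is_walk E W" and edge: "{last W, a} \<in> E"
      using snoc.prems(1) is_walk_snoc[OF False] by simp_all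
    have set_W: "set W \<subseteq> V"
      using is_walk_set[OF walk _ assms(4)] snoc.prems(2) False by simp
    have "?Z \<subseteq> elem ` V"
      using run_subset[OF _ assms(3)] set_W False by (meson list.set_sel(2) subset_code(1))
    then have "((last W, ?Z), (a, apply_event ins elem ?Z a)) \<in> dec_edges V E ins elem"
      using dec_edgeI edge set_W False assms(4) by (metis insert_subset last_in_set subsetD)
    moreover have "((hd W, Y), (last W, ?Z)) \<in> (dec_edges V E ins elem)\<^sup>*"
      using snoc walk False by simp
    ultimately show ?thesis
      using False by (auto intro: rtrancl_into_rtrancl)
  qed simp
qed (simp add: is_walk_def)

lemma path_projects:
  assumes "(p, q) \<in> (dec_edges V E ins elem)\<^sup>*"
  shows "\<exists>W. is_walk E W \<and> hd W = fst p \<and> last W = fst q \<and>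
           snd q = foldl (apply_event ins elem) (snd p) (tl W)"
  using assms
proof (induction rule: rtrancl_induct)
  case base
  show ?case by (intro exI[of _ "[fst p]"]) simp
next
  case (step q r)
  then obtain W where W: "is_walk E W" "hd W = fst p" "last W = fst q"
      "snd q = foldl (apply_event ins elem) (snd p) (tl W)"
    by blast
  have "W \<noteq> []"
    using W(1) is_walk_nonempty by blast
  moreover have "{fst q, fst r} \<in> E" "snd r = apply_event ins elem (snd q) (fst r)"
    using dec_edgeD[of "fst q" "snd q" "fst r" "snd r"] step(2) by simp_all
  ultimately show ?case
    using W is_walk_snoc[of W E "fst r"] by (intro exI[of _ "W @ [fst r]"]) simp
qed

section \<open>Sink components\<close>

lemma sink_component_closed:
  assumes S: "is_sink_component N D C" and "(p, q) \<in> D\<^sup>*" "p \<in> C"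
  shows "q \<in> C"
  using assms(2,3)
  by (induction rule: rtrancl_induct) (use S in \<open>auto simp: is_sink_component_def\<close>)

text \<open>A member of a sink component with an edge to a different node has a predecessor:
  the edge stays in the component, and strong connectivity leads back.\<close>
lemma sink_component_predecessor:
  assumes S: "is_sink_component N D C" and "a \<in> C" "(a, b) \<in> D" "b \<noteq> a"
  shows "\<exists>c. (c, a) \<in> D"
proof -
  have "b \<in> C"
    using S assms(2,3) unfolding is_sink_component_def by blast
  then have "(b, a) \<in> D\<^sup>*"
    using S assms(2) unfolding is_sink_component_def is_scc_def by blast
  then show ?thesis
  proof (cases rule: rtranclE)
    case base
    then show ?thesis using assms(4) by simp
  next
    case (step c)
    then show ?thesis by blast
  qed
qed

lemma sink_component_states:
  assumes "is_sink_component (dec_vertices V elem) D C" "(w, Y) \<in> C"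
  shows "w \<in> V" "Y \<subseteq> elem ` V"
  using assms by (auto simp: is_sink_component_def is_scc_def dec_vertices_def)

text \<open>Every node of an event graph has a neighbour: its element has an insertion
  and a deletion node, so V has a second node, which is reachable.\<close>
lemma event_graph_neighbour:
  assumes G: "event_graph V E ins elem" and "w \<in> V"
  shows "\<exists>w'. {w, w'} \<in> E"
proof -
  obtain a b where "a \<in> V" "b \<in> V" "ins a" "\<not> ins b"
    using G \<open>w \<in> V\<close> unfolding event_graph_def by blast
  then obtain u where "u \<in> V" "u \<noteq> w"
    by blast
  then obtain P where P: "is_walk E P" "hd P = w" "last P = u"
    using G \<open>w \<in> V\<close> unfolding event_graph_def by blast
  have "Suc 0 < length P"
    using P \<open>u \<noteq> w\<close> is_walk_nonempty[OF P(1)] by (cases P) auto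
  then have "{P ! 0, P ! Suc 0} \<in> E"
    using P(1) unfolding is_walk_def by blast
  moreover have "P ! 0 = w"
    using P(2) \<open>Suc 0 < length P\<close> by (cases P) auto
  ultimately show ?thesis
    by auto
qed

text \<open>Every state (w, Y) of the sink component is consistent at w: it is entered by
  some edge of dec(G), and entering w applies the label of w.\<close>
lemma sink_component_consistent:
  assumes G: "event_graph V E ins elem"
    and S: "is_sink_component (dec_vertices V elem) (dec_edges V E ins elem) C"
    and "(w, Y) \<in> C"
  shows "elem w \<in> Y \<longleftrightarrow> ins w"
proof -
  have EV: "\<forall>e\<in>E. e \<subseteq> V \<and> card e = 2"
    using G unfolding event_graph_def by blast
  have "w \<in> V" "Y \<subseteq> elem ` V"
    using sink_component_states[OF S \<open>(w, Y) \<in> C\<close>] by blast+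
  obtain w' where edge: "{w, w'} \<in> E"
    using event_graph_neighbour[OF G \<open>w \<in> V\<close>] by blast
  then have "w' \<in> V" "w' \<noteq> w"
    using EV by (auto simp: card_2_iff)
  then have "((w, Y), (w', apply_event ins elem Y w')) \<in> dec_edges V E ins elem"
    using dec_edgeI edge \<open>w \<in> V\<close> \<open>Y \<subseteq> elem ` V\<close> by metis
  then obtain c where "(c, (w, Y)) \<in> dec_edges V E ins elem"
    using sink_component_predecessor[OF S \<open>(w, Y) \<in> C\<close>] \<open>w' \<noteq> w\<close> by fastforce
  then have "Y = apply_event ins elem (snd c) w"
    using dec_edgeD[of "fst c" "snd c"] by simp
  then show ?thesis
    by (auto simp: apply_event_def)
qed

definition walk_state :: "('v \<Rightarrow> bool) \<Rightarrow> ('v \<Rightarrow> 'u) \<Rightarrow> 'v set \<Rightarrow> 'v list \<Rightarrow> 'u set" where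
  "walk_state ins elem V W = {x \<in> elem ` V. last_is_insertion ins elem W x}"

text \<open>Sufficiency: a closed walk at v mentioning every element leads from a state of C
  at v -- which exists, since C is nonempty and G connected -- to the state it
  describes, which therefore lies in C.\<close>
lemma walk_state_in_sink:
  assumes G: "event_graph V E ins elem"
    and S: "is_sink_component (dec_vertices V elem) (dec_edges V E ins elem) C"
    and W: "is_walk E W" "hd W = v" "last W = v" "v \<in> V"
    and covers: "\<forall>x\<in>elem ` V. mentions elem W x"
  shows "(v, walk_state ins elem V W) \<in> C"
proof -
  let ?D = "dec_edges V E ins elem" and ?run = "foldl (apply_event ins elem)"
  have EV: "\<forall>e\<in>E. e \<subseteq> V"
    using G unfolding event_graph_def by blast
  obtain u Y where uY: "(u, Y) \<in> C"
    using S unfolding is_sink_component_def is_scc_def by fast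
  note u_Y = sink_component_states[OF S uY]
  obtain P where P: "is_walk E P" "hd P = u" "last P = v"
    using G u_Y(1) \<open>v \<in> V\<close> unfolding event_graph_def by blast
  define Y' where "Y' = ?run Y (tl P)"
  have "((u, Y), (v, Y')) \<in> ?D\<^sup>*"
    using walk_lifts[OF P(1) _ u_Y(2) EV] P u_Y(1) by (simp add: Y'_def)
  then have vY': "(v, Y') \<in> C"
    using sink_component_closed[OF S] uY by blast
  note Y'_sub = sink_component_states(2)[OF S vY']
  have "((v, Y'), (v, ?run Y' (tl W))) \<in> ?D\<^sup>*"
    using walk_lifts[OF W(1) _ Y'_sub EV] W by simp
  then have "(v, ?run Y' (tl W)) \<in> C"
    using sink_component_closed[OF S] vY' by blast
  moreover have "?run Y' (tl W) = walk_state ins elem V W"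
    unfolding walk_state_def
    using run_covering_walk[OF is_walk_nonempty[OF W(1)] is_walk_set[OF W(1) _ EV] Y'_sub _ covers]
      sink_component_consistent[OF G S vY'] W
    by simp
  ultimately show ?thesis
    by simp
qed

text \<open>Necessity: from (v, X) \<in> C run a closed walk at v visiting all of V; the state
  reached lies in C, so some path leads back to (v, X).  That path projects to a closed
  walk, and the concatenation of both walks describes X, since X is consistent at v.\<close>
lemma sink_state_walk:
  assumes G: "event_graph V E ins elem"
    and S: "is_sink_component (dec_vertices V elem) (dec_edges V E ins elem) C"
    and vX: "(v, X) \<in> C"
  shows "\<exists>W. is_walk E W \<and> hd W = v \<and> last W = v \<and> (\<forall>x\<in>elem ` V. mentions elem W x) \<and>
           X = walk_state ins elem V W"
proof -
  let ?D = "dec_edges V E ins elem" and ?run = "foldl (apply_event ins elem)"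
  have EV: "\<forall>e\<in>E. e \<subseteq> V"
    using G unfolding event_graph_def by blast
  have "v \<in> V" "X \<subseteq> elem ` V"
    using sink_component_states[OF S vX] by blast+
  obtain W0 where W0: "is_walk E W0" "hd W0 = v" "last W0 = v" "V \<subseteq> set W0"
    using closed_walk_covering[of V E v V] G \<open>v \<in> V\<close> unfolding event_graph_def by blast
  define X' where "X' = ?run X (tl W0)"
  have "((v, X), (v, X')) \<in> ?D\<^sup>*"
    using walk_lifts[OF W0(1) _ \<open>X \<subseteq> elem ` V\<close> EV] W0 \<open>v \<in> V\<close> by (simp add: X'_def)
  then have "(v, X') \<in> C"
    using sink_component_closed[OF S] vX by blast
  then have "((v, X'), (v, X)) \<in> ?D\<^sup>*"
    using S vX unfolding is_sink_component_def is_scc_def by blast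
  then obtain W1 where W1: "is_walk E W1" "hd W1 = v" "last W1 = v" "X = ?run X' (tl W1)"
    using path_projects[of "(v, X')" "(v, X)" V E ins elem] by auto
  define W where "W = W0 @ tl W1"
  have ne: "W0 \<noteq> []" "W1 \<noteq> []"
    using W0(1) W1(1) is_walk_nonempty by blast+
  have W: "is_walk E W" "hd W = v" "last W = v" "V \<subseteq> set W"
    using is_walk_join[OF W0(1) W1(1)] walk_join_last[of W1 W0] W0 W1 ne
    by (auto simp: W_def)
  have covers: "\<forall>x\<in>elem ` V. mentions elem W x"
    using W(4) unfolding mentions_def by (metis image_iff in_set_conv_nth subsetD)
  have "X = ?run X (tl W)"
    using W1(4) ne by (simp add: W_def X'_def)
  also have "\<dots> = walk_state ins elem V W"
    unfolding walk_state_def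
    using run_covering_walk[OF is_walk_nonempty[OF W(1)] is_walk_set[OF W(1) _ EV]
        \<open>X \<subseteq> elem ` V\<close> _ covers] sink_component_consistent[OF G S vX] W \<open>v \<in> V\<close>
    by simp
  finally show ?thesis
    using W covers by blast
qed

theorem mainTheorem3:
  fixes V :: "'v set" and E :: "'v set set" and ins :: "'v \<Rightarrow> bool" and elem :: "'v \<Rightarrow> 'u"
    and C :: "('v \<times> 'u set) set"
  assumes "event_graph V E ins elem"
    and "is_sink_component (dec_vertices V elem) (dec_edges V E ins elem) C"
    and "v \<in> V" and "X \<subseteq> elem ` V"
  shows "(v, X) \<in> C \<longleftrightarrow>
    (\<exists>W. is_walk E W \<and> hd W = v \<and> last W = v \<and>
       (\<forall>x\<in>elem ` V. \<exists>i<length W. elem (W ! i) = x) \<and>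
       (\<forall>x\<in>elem ` V. x \<in> X \<longleftrightarrow>
          (\<exists>i<length W. elem (W ! i) = x \<and> ins (W ! i) \<and>
             (\<forall>j. i < j \<and> j < length W \<longrightarrow> elem (W ! j) \<noteq> x))))"
    (is "_ \<longleftrightarrow> (\<exists>W. ?closed_walk W)")
proof -
  have walk_iff: "\<And>W. (\<forall>x\<in>elem ` V. x \<in> X \<longleftrightarrow> last_is_insertion ins elem W x) \<longleftrightarrow>
      X = walk_state ins elem V W"
    using assms(4) by (auto simp: walk_state_def)
  show ?thesis
  proof
    assume "(v, X) \<in> C"
    then show "\<exists>W. ?closed_walk W"
      using sink_state_walk[OF assms(1,2)] walk_iff
      unfolding mentions_def last_is_insertion_def by metis
  next
    assume "\<exists>W. ?closed_walk W"
    then obtain W where "is_walk E W" "hd W = v" "last W = v" "\<forall>x\<in>elem ` V. mentions elem W x"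
        "X = walk_state ins elem V W"
      using walk_iff unfolding mentions_def last_is_insertion_def by metis
    then show "(v, X) \<in> C"
      using walk_state_in_sink[OF assms(1,2)] assms(3) by blast
  qed
qed

end
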